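(* $$\bigcup_{P\in S^n}\overline{\mathcal{H}_{\rm Wulff}(S^n,P)}=\overline{\mathcal{H}_{\mbox{s-conv}}(S^n)}.$$
   Context: $S^n$ is the unit sphere in $\mathbb{R}^{n+1}$, $n\ge1$; $|PQ|=\arccos(P\cdot Q)$. $H(P)=\{Q\in S^n:P\cdot Q\ge0\}$. $\mathcal{H}(S^n)$ is the set of non-empty closed subsets of $S^n$ with the Pompeiu-Hausdorff metric $h(A,B)=\max\{\max_{x\in A}\min_{y\in B}|xy|,\ \max_{y\in B}\min_{x\in A}|xy|\}$. A subset is hemispherical if it is disjoint from $H(Q)$ for some $Q\in S^n$. For $A,B$ in a hemispherical set, the arc $AB=\{((1-t)A+tB)/\|(1-t)A+tB\|:0\le t\le1\}$; a hemispherical set $W$ is spherical convex if $AB\subset W$ for all $A,B\in W$, and a spherical convex body if moreover it is closed and has an interior point. For $P\in S^n$, $\mathcal{H}_{\rm Wulff}(S^n,P)$ is the set of $W\in\mathcal{H}(S^n)$ with $W\cap H(-P)=\emptyset$, $P$ an interior point of $W$, and $W$ a spherical convex body. $\mathcal{H}_{\mbox{s-conv}}(S^n)$ is the set of non-empty closed spherical convex subsets of $S^n$. Overlines denote closures in $(\mathcal{H}(S^n),h)$. *)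

theory Defs
  imports "HOL-Analysis.Analysis"
begin

text \<open>The unit sphere S^n is modelled as sphere 0 1 in a Euclidean space 'a
  of dimension n+1 (so DIM('a) \<ge> 2 encodes n \<ge> 1).\<close>

definition sdist :: "'a::euclidean_space \<Rightarrow> 'a \<Rightarrow> real" where
  "sdist P Q = arccos (P \<bullet> Q)"

definition hemi :: "'a::euclidean_space \<Rightarrow> 'a set" where
  "hemi P = {Q \<in> sphere 0 1. P \<bullet> Q \<ge> 0}"

definition HS :: "'a::euclidean_space set set" where
  "HS = {A. A \<noteq> {} \<and> A \<subseteq> sphere 0 1 \<and> closed A}"

definition sph_hausdorff :: "'a::euclidean_space set \<Rightarrow> 'a set \<Rightarrow> real" where
  "sph_hausdorff A B =
     max (SUP x\<in>A. INF y\<in>B. sdist x y) (SUP y\<in>B. INF x\<in>A. sdist x y)"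

definition hemispherical :: "'a::euclidean_space set \<Rightarrow> bool" where
  "hemispherical W \<longleftrightarrow> W \<subseteq> sphere 0 1 \<and> (\<exists>Q\<in>sphere 0 1. W \<inter> hemi Q = {})"

definition sarc :: "'a::euclidean_space \<Rightarrow> 'a \<Rightarrow> 'a set" where
  "sarc A B = {((1 - t) *\<^sub>R A + t *\<^sub>R B) /\<^sub>R norm ((1 - t) *\<^sub>R A + t *\<^sub>R B) | t. 0 \<le> t \<and> t \<le> 1}"

definition sconvex :: "'a::euclidean_space set \<Rightarrow> bool" where
  "sconvex W \<longleftrightarrow> hemispherical W \<and> (\<forall>A\<in>W. \<forall>B\<in>W. sarc A B \<subseteq> W)"

definition sinterior_point :: "'a::euclidean_space \<Rightarrow> 'a set \<Rightarrow> bool" where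
  "sinterior_point P W \<longleftrightarrow> (\<exists>e>0. sphere 0 1 \<inter> ball P e \<subseteq> W)"

definition sconvex_body :: "'a::euclidean_space set \<Rightarrow> bool" where
  "sconvex_body W \<longleftrightarrow> sconvex W \<and> closed W \<and> (\<exists>P. sinterior_point P W)"

definition HWulff :: "'a::euclidean_space \<Rightarrow> 'a set set" where
  "HWulff P = {W \<in> HS. W \<inter> hemi (-P) = {} \<and> sinterior_point P W \<and> sconvex_body W}"

definition Hsconv :: "'a::euclidean_space set set" where
  "Hsconv = {W. W \<noteq> {} \<and> closed W \<and> sconvex W}"

definition hclosure :: "'a::euclidean_space set set \<Rightarrow> 'a set set" where
  "hclosure F = {X \<in> HS. \<forall>e>0. \<exists>W\<in>F. sph_hausdorff X W < e}"

end

theory Submission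
  imports Defs
begin

(* A spherical convex set W avoids a closed hemisphere, so its convex hull C stays in an open
  half-space and projects radially back onto W. If P is the direction of the point of C nearest
  the origin, the radial projections of the neighbourhoods C + cball 0 r are spherical convex
  bodies containing a cap around P and missing the hemisphere around -P, i.e. Wulff shapes with
  centre P, and they converge to W as r \<rightarrow> 0. For X in the closure of the spherical convex sets,
  the centres of the Wulff shapes approximating the approximants of X accumulate at some P by
  compactness of the sphere; a rotation taking a centre Q to P moves every point of the sphere by
  at most 4|Q - P|, so X is also a limit of Wulff shapes centred at P. *)

lemma abs_inner_sphere_le_1:
  fixes x y :: "'a::euclidean_space"
  assumes "x \<in> sphere 0 1" "y \<in> sphere 0 1"
  shows "\<bar>x \<bullet> y\<bar> \<le> 1"
  using Cauchy_Schwarz_ineq2[of x y] assms by simp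

lemma cos_sdist:
  fixes x y :: "'a::euclidean_space"
  assumes "x \<in> sphere 0 1" "y \<in> sphere 0 1"
  shows "cos (sdist x y) = x \<bullet> y"
  unfolding sdist_def using abs_inner_sphere_le_1[OF assms] by (simp add: cos_arccos_abs)

lemma sdist_bounds:
  fixes x y :: "'a::euclidean_space"
  assumes "x \<in> sphere 0 1" "y \<in> sphere 0 1"
  shows "0 \<le> sdist x y" "sdist x y \<le> pi"
  unfolding sdist_def using abs_inner_sphere_le_1[OF assms]
  by (auto intro: arccos_lbound arccos_ubound)

lemma dist_sphere_squared:
  fixes x y :: "'a::euclidean_space"
  assumes "x \<in> sphere 0 1" "y \<in> sphere 0 1"
  shows "(dist x y)\<^sup>2 = 2 - 2 * (x \<bullet> y)"
proof -
  have "(dist x y)\<^sup>2 = x \<bullet> x - 2 * (x \<bullet> y) + y \<bullet> y"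
    by (simp add: dist_norm power2_norm_eq_inner inner_diff_left inner_diff_right inner_commute)
  then show ?thesis
    using assms by (simp add: inner_commute flip: power2_norm_eq_inner)
qed

lemma dist_le_sdist:
  fixes x y :: "'a::euclidean_space"
  assumes "x \<in> sphere 0 1" "y \<in> sphere 0 1"
  shows "dist x y \<le> sdist x y"
proof -
  let ?t = "sdist x y"
  have "cos ?t = 1 - 2 * (sin (?t/2))\<^sup>2"
    using cos_double_sin[of "?t/2"] by simp
  moreover have "(sin (?t/2))\<^sup>2 \<le> (?t/2)\<^sup>2"
    using abs_sin_x_le_abs_x[of "?t/2"] by (metis abs_ge_zero power2_abs power_mono)
  ultimately have "(dist x y)\<^sup>2 \<le> ?t\<^sup>2"
    using cos_sdist[OF assms] dist_sphere_squared[OF assms] by (simp add: power_divide)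
  then show ?thesis
    using sdist_bounds[OF assms] by (meson power2_le_imp_le)
qed

lemma sdist_uniformly_small:
  assumes "0 < e"
  obtains d where "0 < d"
    "\<And>x y::'a::euclidean_space. x \<in> sphere 0 1 \<Longrightarrow> y \<in> sphere 0 1 \<Longrightarrow> dist x y < d \<Longrightarrow> sdist x y < e"
proof -
  define e' where "e' = min e pi"
  have e': "0 < e'" "e' \<le> pi" "e' \<le> e"
    using assms pi_gt_zero unfolding e'_def by auto
  have "cos e' < cos 0"
    using e' by (intro cos_monotone_0_pi) auto
  then have d: "0 < sqrt (2 - 2 * cos e')"
    by simp
  show ?thesis
  proof (rule that[OF d])
    fix x y :: 'a
    assume x: "x \<in> sphere 0 1" and y: "y \<in> sphere 0 1" and xy: "dist x y < sqrt (2 - 2 * cos e')"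
    show "sdist x y < e"
    proof (rule ccontr)
      assume "\<not> sdist x y < e"
      then have "cos (sdist x y) \<le> cos e'"
        using e' sdist_bounds[OF x y] by (intro cos_monotone_0_pi_le) auto
      then have "sqrt (2 - 2 * cos e') \<le> sqrt ((dist x y)\<^sup>2)"
        using cos_sdist[OF x y] dist_sphere_squared[OF x y] by simp
      then show False
        using xy by simp
    qed
  qed
qed

subsection \<open>The Pompeiu-Hausdorff closure in chordal terms\<close>

definition hausdorff_close :: "'a::euclidean_space set \<Rightarrow> 'a set \<Rightarrow> real \<Rightarrow> bool" where
  "hausdorff_close X Y e \<longleftrightarrow> (\<forall>x\<in>X. \<exists>y\<in>Y. dist x y < e) \<and> (\<forall>y\<in>Y. \<exists>x\<in>X. dist x y < e)"

lemma hausdorff_close_trans: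
  "hausdorff_close X Y a \<Longrightarrow> hausdorff_close Y Z b \<Longrightarrow> hausdorff_close X Z (a + b)"
  unfolding hausdorff_close_def by (smt (verit) dist_triangle)

lemma hausdorff_close_mono: "hausdorff_close X Y a \<Longrightarrow> a \<le> b \<Longrightarrow> hausdorff_close X Y b"
  unfolding hausdorff_close_def by (meson less_le_trans)

lemma sdist_INF_bounds:
  fixes x :: "'a::euclidean_space"
  assumes "x \<in> sphere 0 1" "W \<noteq> {}" "W \<subseteq> sphere 0 1"
  shows "bdd_below ((\<lambda>y. sdist x y) ` W)" "(INF y\<in>W. sdist x y) \<le> pi"
    "bdd_below ((\<lambda>y. sdist y x) ` W)" "(INF y\<in>W. sdist y x) \<le> pi"
proof -
  show b1: "bdd_below ((\<lambda>y. sdist x y) ` W)"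
    using assms sdist_bounds(1)[of x] by (intro bdd_belowI[of _ 0]) auto
  show b2: "bdd_below ((\<lambda>y. sdist y x) ` W)"
    using assms sdist_bounds(1)[of _ x] by (intro bdd_belowI[of _ 0]) auto
  obtain y where y: "y \<in> W"
    using assms by auto
  show "(INF y\<in>W. sdist x y) \<le> pi"
    using cINF_lower[OF b1 y] sdist_bounds(2)[of x y] assms y by auto
  show "(INF y\<in>W. sdist y x) \<le> pi"
    using cINF_lower[OF b2 y] sdist_bounds(2)[of y x] assms y by auto
qed

lemma hausdorff_close_if_sph_hausdorff_less:
  fixes X W :: "'a::euclidean_space set"
  assumes X: "X \<noteq> {}" "X \<subseteq> sphere 0 1" and W: "W \<noteq> {}" "W \<subseteq> sphere 0 1"
    and less: "sph_hausdorff X W < e"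
  shows "hausdorff_close X W e"
  unfolding hausdorff_close_def
proof safe
  fix x assume x: "x \<in> X"
  have "bdd_above ((\<lambda>x. INF y\<in>W. sdist x y) ` X)"
    using sdist_INF_bounds(2)[OF _ W] X by (intro bdd_aboveI[of _ pi]) auto
  then have "(INF y\<in>W. sdist x y) \<le> (SUP x\<in>X. INF y\<in>W. sdist x y)"
    by (rule cSUP_upper[OF x])
  then have "(INF y\<in>W. sdist x y) < e"
    using less unfolding sph_hausdorff_def by simp
  moreover have "x \<in> sphere 0 1"
    using x X by auto
  ultimately obtain y where y: "y \<in> W" "sdist x y < e"
    using cINF_less_iff[OF W(1) sdist_INF_bounds(1)[OF _ W]] by auto
  then show "\<exists>y\<in>W. dist x y < e"
    using dist_le_sdist[of x y] x X W by force
next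
  fix y assume y: "y \<in> W"
  have "bdd_above ((\<lambda>y. INF x\<in>X. sdist x y) ` W)"
    using sdist_INF_bounds(4)[OF _ X] W by (intro bdd_aboveI[of _ pi]) auto
  then have "(INF x\<in>X. sdist x y) \<le> (SUP y\<in>W. INF x\<in>X. sdist x y)"
    by (rule cSUP_upper[OF y])
  then have "(INF x\<in>X. sdist x y) < e"
    using less unfolding sph_hausdorff_def by simp
  moreover have "y \<in> sphere 0 1"
    using y W by auto
  ultimately obtain x where x: "x \<in> X" "sdist x y < e"
    using cINF_less_iff[OF X(1) sdist_INF_bounds(3)[OF _ X]] by auto
  then show "\<exists>x\<in>X. dist x y < e"
    using dist_le_sdist[of x y] y X W by force
qed

lemma sph_hausdorff_le:
  fixes X W :: "'a::euclidean_space set"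
  assumes X: "X \<noteq> {}" "X \<subseteq> sphere 0 1" and W: "W \<noteq> {}" "W \<subseteq> sphere 0 1"
    and XW: "\<forall>x\<in>X. \<exists>y\<in>W. sdist x y \<le> c" and WX: "\<forall>y\<in>W. \<exists>x\<in>X. sdist x y \<le> c"
  shows "sph_hausdorff X W \<le> c"
proof -
  have "(SUP x\<in>X. INF y\<in>W. sdist x y) \<le> c"
  proof (rule cSUP_least[OF X(1)])
    fix x assume x: "x \<in> X"
    then obtain y where y: "y \<in> W" "sdist x y \<le> c"
      using XW by auto
    have "(INF y\<in>W. sdist x y) \<le> sdist x y"
      using sdist_INF_bounds(1)[OF _ W] x X y by (intro cINF_lower) auto
    then show "(INF y\<in>W. sdist x y) \<le> c"
      using y by simp
  qed
  moreover have "(SUP y\<in>W. INF x\<in>X. sdist x y) \<le> c"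
  proof (rule cSUP_least[OF W(1)])
    fix y assume y: "y \<in> W"
    then obtain x where x: "x \<in> X" "sdist x y \<le> c"
      using WX by auto
    have "(INF x\<in>X. sdist x y) \<le> sdist x y"
      using sdist_INF_bounds(3)[OF _ X] x W y by (intro cINF_lower) auto
    then show "(INF x\<in>X. sdist x y) \<le> c"
      using x by simp
  qed
  ultimately show ?thesis
    unfolding sph_hausdorff_def by simp
qed

lemma hclosure_eq_hausdorff_close:
  fixes F :: "'a::euclidean_space set set"
  assumes F: "F \<subseteq> HS"
  shows "hclosure F = {X \<in> HS. \<forall>e>0. \<exists>W\<in>F. hausdorff_close X W e}"
proof safe
  fix X and e :: real
  assume "X \<in> hclosure F" "0 < e"
  then obtain W where "W \<in> F" "sph_hausdorff X W < e" "X \<in> HS"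
    unfolding hclosure_def by auto
  then show "\<exists>W\<in>F. hausdorff_close X W e"
    using F hausdorff_close_if_sph_hausdorff_less[of X W e] unfolding HS_def by blast
next
  fix X assume "X \<in> hclosure F"
  then show "X \<in> HS"
    unfolding hclosure_def by auto
next
  fix X assume X: "X \<in> HS" and close: "\<forall>e>0. \<exists>W\<in>F. hausdorff_close X W e"
  show "X \<in> hclosure F"
    unfolding hclosure_def
  proof (intro CollectI conjI X allI impI)
    fix e :: real assume "0 < e"
    then obtain d where "0 < d"
      and d: "\<And>x y::'a. x \<in> sphere 0 1 \<Longrightarrow> y \<in> sphere 0 1 \<Longrightarrow> dist x y < d \<Longrightarrow> sdist x y < e/2"
      using sdist_uniformly_small[of "e/2"] by auto
    then obtain W where W: "W \<in> F" "hausdorff_close X W d"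
      using close by auto
    have X1: "X \<noteq> {}" "X \<subseteq> sphere 0 1"
      using X unfolding HS_def by auto
    have W1: "W \<noteq> {}" "W \<subseteq> sphere 0 1"
      using W F unfolding HS_def by auto
    have "sph_hausdorff X W \<le> e/2"
      using W(2) d X1 W1 unfolding hausdorff_close_def
      by (intro sph_hausdorff_le[OF X1 W1]) (meson less_imp_le subsetD)+
    then show "\<exists>W\<in>F. sph_hausdorff X W < e"
      using W \<open>0 < e\<close> by force
  qed
qed

subsection \<open>Approximation of spherical convex sets by Wulff shapes\<close>

lemma norm_sgn_diff_le:
  fixes u v :: "'a::real_normed_vector"
  assumes "u \<noteq> 0" "v \<noteq> 0"
  shows "norm (sgn u - sgn v) \<le> 2 * norm (u - v) / norm v"
proof -
  have nu: "norm u > 0" and nv: "norm v > 0"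
    using assms by auto
  have split: "sgn u - sgn v = (u - v) /\<^sub>R norm v + (1/norm u - 1/norm v) *\<^sub>R u"
    by (simp add: sgn_div_norm scaleR_diff_left scaleR_diff_right divide_inverse)
  have "(1/norm u - 1/norm v) * norm u = (norm v - norm u) / norm v"
    using nu nv by (simp add: divide_simps)
  then have "norm ((1/norm u - 1/norm v) *\<^sub>R u) = \<bar>(norm v - norm u) / norm v\<bar>"
    by (metis abs_mult abs_norm_cancel norm_scaleR)
  also have "\<dots> = \<bar>norm v - norm u\<bar> / norm v"
    using nv by simp
  also have "\<dots> \<le> norm (u - v) / norm v"
    using nv norm_triangle_ineq3[of v u] by (simp add: divide_right_mono norm_minus_commute)
  finally have "norm ((1/norm u - 1/norm v) *\<^sub>R u) \<le> norm (u - v) / norm v" .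
  moreover have "norm ((u - v) /\<^sub>R norm v) = norm (u - v) / norm v"
    using nv by (simp add: divide_inverse mult.commute)
  moreover have "norm (sgn u - sgn v)
      \<le> norm ((u - v) /\<^sub>R norm v) + norm ((1/norm u - 1/norm v) *\<^sub>R u)"
    unfolding split by (rule norm_triangle_ineq)
  ultimately show ?thesis
    by (simp add: field_simps)
qed

lemma sarc_sgn_image_subset:
  fixes S :: "'a::euclidean_space set"
  assumes S: "convex S" and pos: "\<forall>y\<in>S. 0 < P \<bullet> y"
    and A: "A \<in> sgn ` S" and B: "B \<in> sgn ` S"
  shows "sarc A B \<subseteq> sgn ` S"
proof
  fix z assume "z \<in> sarc A B"
  then obtain t where t: "0 \<le> t" "t \<le> 1"
    and z: "z = ((1 - t) *\<^sub>R A + t *\<^sub>R B) /\<^sub>R norm ((1 - t) *\<^sub>R A + t *\<^sub>R B)"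
    unfolding sarc_def by auto
  obtain a b where ab: "a \<in> S" "A = sgn a" "b \<in> S" "B = sgn b"
    using A B by auto
  have na: "norm a > 0" and nb: "norm b > 0"
    using pos ab by fastforce+
  define \<sigma> where "\<sigma> = (1 - t) / norm a + t / norm b"
  have \<sigma>: "\<sigma> > 0"
    unfolding \<sigma>_def using t na nb by (cases "t = 0") (auto intro: add_nonneg_pos add_pos_nonneg)
  \<comment> \<open>the point of the segment from \<open>a\<close> to \<open>b\<close> on the ray through \<open>z\<close>\<close>
  define v where "v = ((1 - t) / norm a / \<sigma>) *\<^sub>R a + (t / norm b / \<sigma>) *\<^sub>R b"
  have "(1 - t) / norm a / \<sigma> + t / norm b / \<sigma> = ((1 - t) / norm a + t / norm b) / \<sigma>"
    by (simp add: add_divide_distrib)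
  then have "(1 - t) / norm a / \<sigma> + t / norm b / \<sigma> = 1"
    using \<sigma> unfolding \<sigma>_def by simp
  then have "v \<in> S"
    unfolding v_def using t na nb \<sigma> by (intro convexD[OF S ab(1,3)]) auto
  have "\<sigma> *\<^sub>R v = ((1 - t) / norm a) *\<^sub>R a + (t / norm b) *\<^sub>R b"
    unfolding v_def using \<sigma> by (simp add: scaleR_add_right)
  then have "(1 - t) *\<^sub>R A + t *\<^sub>R B = \<sigma> *\<^sub>R v"
    unfolding ab(2,4) by (simp add: sgn_div_norm divide_inverse mult.commute)
  then have "z = sgn v"
    unfolding z using \<sigma> by (simp add: sgn_div_norm)
  then show "z \<in> sgn ` S"
    using \<open>v \<in> S\<close> by auto
qed

lemma convex_positive_cone:
  fixes W :: "'a::euclidean_space set"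
  assumes pos: "\<forall>w\<in>W. 0 < c \<bullet> w" and arc: "\<forall>A\<in>W. \<forall>B\<in>W. sarc A B \<subseteq> W"
  shows "convex {s *\<^sub>R w | s w. 0 < s \<and> w \<in> W}"
proof (rule convexI)
  fix x y :: 'a and u v :: real
  assume "x \<in> {s *\<^sub>R w | s w. 0 < s \<and> w \<in> W}" "y \<in> {s *\<^sub>R w | s w. 0 < s \<and> w \<in> W}"
    and u: "0 \<le> u" and v: "0 \<le> v" and uv: "u + v = 1"
  then obtain s1 w1 s2 w2 where
    x: "x = s1 *\<^sub>R w1" "0 < s1" "w1 \<in> W" and y: "y = s2 *\<^sub>R w2" "0 < s2" "w2 \<in> W"
    by auto
  define \<sigma> where "\<sigma> = u * s1 + v * s2"
  have \<sigma>: "\<sigma> > 0"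
    unfolding \<sigma>_def using u v uv x y by (cases "u = 0") (auto intro: add_pos_nonneg)
  define t where "t = v * s2 / \<sigma>"
  have t: "0 \<le> t" "t \<le> 1" "\<sigma> * (1 - t) = u * s1" "\<sigma> * t = v * s2"
    unfolding t_def using \<sigma> u v x y by (auto simp: \<sigma>_def field_simps)
  define z where "z = (1 - t) *\<^sub>R w1 + t *\<^sub>R w2"
  have "0 < c \<bullet> z"
    unfolding z_def using pos x(3) y(3) t(1,2)
    by (cases "t = 0") (auto simp: inner_add_right intro!: add_pos_nonneg add_nonneg_pos)
  then have nz: "0 < norm z"
    by (metis inner_zero_right less_irrefl zero_less_norm_iff)
  have "sgn z \<in> sarc w1 w2"
    unfolding sarc_def z_def sgn_div_norm using t by blast
  then have "sgn z \<in> W"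
    using arc x y by blast
  moreover have "u *\<^sub>R x + v *\<^sub>R y = \<sigma> *\<^sub>R z"
    unfolding x y z_def by (simp add: scaleR_add_right t(3,4) mult.commute)
  then have "u *\<^sub>R x + v *\<^sub>R y = (\<sigma> * norm z) *\<^sub>R sgn z"
    using nz by (simp add: sgn_div_norm)
  ultimately show "u *\<^sub>R x + v *\<^sub>R y \<in> {s *\<^sub>R w | s w. 0 < s \<and> w \<in> W}"
    using \<sigma> nz by force
qed

lemma sgn_convex_hull_sconvex:
  fixes W :: "'a::euclidean_space set"
  assumes W: "W \<subseteq> sphere 0 1" and pos: "\<forall>w\<in>W. 0 < c \<bullet> w"
    and arc: "\<forall>A\<in>W. \<forall>B\<in>W. sarc A B \<subseteq> W" and y: "y \<in> convex hull W"
  shows "sgn y \<in> W"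
proof -
  have "W \<subseteq> {s *\<^sub>R w | s w. 0 < s \<and> w \<in> W}"
    by (force intro: exI[of _ 1])
  then have "convex hull W \<subseteq> {s *\<^sub>R w | s w. 0 < s \<and> w \<in> W}"
    by (intro hull_minimal convex_positive_cone[OF pos arc])
  then obtain s w where "y = s *\<^sub>R w" "0 < s" "w \<in> W"
    using y by blast
  then show ?thesis
    using W by (auto simp: sgn_scaleR sgn_div_norm subset_iff)
qed

lemma nearest_point_direction:
  fixes C :: "'a::euclidean_space set"
  assumes "compact C" "convex C" "C \<noteq> {}" "0 \<notin> C"
  obtains P m where "P \<in> sphere 0 1" "0 < m" "m *\<^sub>R P \<in> C" "\<And>y. y \<in> C \<Longrightarrow> m \<le> P \<bullet> y"
proof -
  have cl: "closed C"
    using assms(1) by (rule compact_imp_closed)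
  define P0 where "P0 = closest_point C 0"
  have P0: "P0 \<in> C" "\<forall>y\<in>C. dist 0 P0 \<le> dist 0 y"
    unfolding P0_def by (rule closest_point_exists[OF cl assms(3)])+
  then have nz: "P0 \<noteq> 0"
    using assms(4) by auto
  show ?thesis
  proof (rule that[of "sgn P0" "norm P0"])
    show "sgn P0 \<in> sphere 0 1" "0 < norm P0" "norm P0 *\<^sub>R sgn P0 \<in> C"
      using nz P0 by (auto simp: norm_sgn sgn_div_norm)
    fix y assume "y \<in> C"
    then have "P0 \<bullet> P0 \<le> P0 \<bullet> y"
      using any_closest_point_dot[OF assms(2) cl P0(1) _ P0(2)] by (simp add: inner_diff_right)
    then show "norm P0 \<le> sgn P0 \<bullet> y"
      using nz by (simp add: sgn_div_norm dot_square_norm power2_eq_square field_simps)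
  qed
qed

lemma sgn_image_in_HWulff:
  fixes K :: "'a::euclidean_space set"
  assumes "compact K" "convex K" and P: "P \<in> sphere 0 1" and pos: "\<forall>x\<in>K. 0 < P \<bullet> x"
    and "0 < m" "0 < r" and cap: "cball (m *\<^sub>R P) r \<subseteq> K"
  shows "sgn ` K \<in> HWulff P"
proof -
  have nz: "0 \<notin> K"
    using pos by fastforce
  have sph: "sgn ` K \<subseteq> sphere 0 1"
    using nz by (auto simp: norm_sgn)
  have "continuous_on K sgn"
    using nz by (intro continuous_on_sgn continuous_on_id) auto
  then have cl: "closed (sgn ` K)"
    using assms(1) by (intro compact_imp_closed compact_continuous_image)
  have "0 < P \<bullet> sgn x" if "x \<in> K" for x
    using pos that nz by (auto simp: sgn_div_norm intro!: mult_pos_pos)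
  then have avoid: "sgn ` K \<inter> hemi (- P) = {}"
    by (fastforce simp: hemi_def)
  have int: "sinterior_point P (sgn ` K)"
    unfolding sinterior_point_def
  proof (intro exI[of _ "r / m"] conjI subsetI)
    fix x assume x: "x \<in> sphere 0 1 \<inter> ball P (r / m)"
    have "dist (m *\<^sub>R P) (m *\<^sub>R x) = m * dist P x"
      using \<open>0 < m\<close> by (simp add: dist_norm flip: scaleR_diff_right)
    also have "\<dots> < r"
      using x \<open>0 < m\<close> by (simp add: field_simps)
    finally have "m *\<^sub>R x \<in> K"
      using cap by auto
    moreover have "sgn (m *\<^sub>R x) = x"
      using x \<open>0 < m\<close> by (simp add: sgn_scaleR sgn_div_norm)
    ultimately show "x \<in> sgn ` K"
      by (metis image_eqI)
  qed (use assms in simp)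
  have "- P \<in> sphere 0 1"
    using P by simp
  then have "sconvex (sgn ` K)"
    unfolding sconvex_def hemispherical_def
    using sph avoid sarc_sgn_image_subset[OF assms(2) pos] by blast
  moreover have "sgn ` K \<noteq> {}"
    using cap \<open>0 < r\<close> by auto
  ultimately show ?thesis
    unfolding HWulff_def HS_def sconvex_body_def using sph cl avoid int by blast
qed

lemma sgn_thickening_in_HWulff:
  fixes C :: "'a::euclidean_space set"
  assumes "compact C" "convex C" and P: "P \<in> sphere 0 1" "0 < m" "m *\<^sub>R P \<in> C"
    and lower: "\<And>y. y \<in> C \<Longrightarrow> m \<le> P \<bullet> y" and r: "0 < r" "r < m"
  shows "sgn ` (\<Union>y\<in>C. \<Union>z\<in>cball 0 r. {y + z}) \<in> HWulff P"
proof -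
  define K where "K = (\<Union>y\<in>C. \<Union>z\<in>cball 0 r. {y + z})"
  have "compact K" "convex K"
    unfolding K_def using assms(1,2) by (auto intro: compact_sums' convex_sums)
  have "\<forall>x\<in>K. 0 < P \<bullet> x"
  proof
    fix x assume "x \<in> K"
    then obtain y z where yz: "x = y + z" "y \<in> C" "norm z \<le> r"
      unfolding K_def by auto
    have "\<bar>P \<bullet> z\<bar> \<le> r"
      using Cauchy_Schwarz_ineq2[of P z] P(1) yz(3) by simp
    then show "0 < P \<bullet> x"
      using lower[OF yz(2)] r(2) yz(1) by (simp add: inner_add_right)
  qed
  moreover have "cball (m *\<^sub>R P) r \<subseteq> K"
  proof
    fix x assume "x \<in> cball (m *\<^sub>R P) r"
    then have "x - m *\<^sub>R P \<in> cball 0 r"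
      by (simp add: dist_norm norm_minus_commute)
    then have "m *\<^sub>R P + (x - m *\<^sub>R P) \<in> K"
      unfolding K_def using P(3) by blast
    then show "x \<in> K"
      by simp
  qed
  ultimately show ?thesis
    unfolding K_def [symmetric] using sgn_image_in_HWulff \<open>compact K\<close> \<open>convex K\<close> P(1,2) r(1)
    by blast
qed

lemma dist_sgn_thickening_le:
  fixes C :: "'a::real_normed_vector set"
  assumes lower: "\<And>y. y \<in> C \<Longrightarrow> m \<le> norm y" and "0 < m" "r < m"
    and x: "x \<in> sgn ` (\<Union>y\<in>C. \<Union>z\<in>cball 0 r. {y + z})"
  obtains y where "y \<in> C" "dist (sgn y) x \<le> 2 * r / m"
proof -
  obtain y z where yz: "x = sgn (y + z)" "y \<in> C" "norm z \<le> r"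
    using x by auto
  have "m - r \<le> norm (y + z)"
    using lower[OF yz(2)] yz(3) norm_triangle_ineq4[of "y + z" z] by simp
  then have "y + z \<noteq> 0" "y \<noteq> 0"
    using lower[OF yz(2)] assms(2,3) by auto
  then have "dist (sgn y) x \<le> 2 * norm z / norm y"
    using norm_sgn_diff_le[of "y + z" y] yz(1) by (simp add: dist_norm norm_minus_commute)
  also have "\<dots> \<le> 2 * r / m"
    using yz(3) lower[OF yz(2)] assms(2) order_trans[OF norm_ge_zero yz(3)] by (intro frac_le) auto
  finally show ?thesis
    using that yz(2) by blast
qed

lemma Hsconv_approximated_by_HWulff:
  fixes W :: "'a::euclidean_space set"
  assumes "W \<in> Hsconv"
  obtains P where "P \<in> sphere 0 1" "\<And>e. 0 < e \<Longrightarrow> \<exists>W'\<in>HWulff P. hausdorff_close W W' e"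
proof -
  obtain Q where "W \<noteq> {}" "closed W" and W: "W \<subseteq> sphere 0 1"
    and arc: "\<forall>A\<in>W. \<forall>B\<in>W. sarc A B \<subseteq> W" and avoid: "W \<inter> hemi Q = {}"
    using assms unfolding Hsconv_def sconvex_def hemispherical_def by blast
  have pos: "\<forall>w\<in>W. 0 < - Q \<bullet> w"
  proof
    fix w assume "w \<in> W"
    then have "w \<notin> hemi Q"
      using avoid by blast
    then show "0 < - Q \<bullet> w"
      using \<open>w \<in> W\<close> W unfolding hemi_def by auto
  qed
  define C where "C = convex hull W"
  have "compact W"
    using \<open>closed W\<close> W by (metis bounded_sphere bounded_subset compact_eq_bounded_closed)
  then have "compact C" "convex C" "W \<subseteq> C"
    unfolding C_def by (simp_all add: compact_convex_hull hull_subset)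
  then have "C \<noteq> {}"
    using \<open>W \<noteq> {}\<close> by auto
  have "C \<subseteq> {y. 0 < - Q \<bullet> y}"
    unfolding C_def using pos convex_halfspace_gt[of 0 "- Q"] by (intro hull_minimal) auto
  then obtain P m where P: "P \<in> sphere 0 1" "0 < m" "m *\<^sub>R P \<in> C" "\<And>y. y \<in> C \<Longrightarrow> m \<le> P \<bullet> y"
    using nearest_point_direction[OF \<open>compact C\<close> \<open>convex C\<close> \<open>C \<noteq> {}\<close>]
    by (metis less_irrefl inner_zero_right mem_Collect_eq subsetD)
  have normC: "m \<le> norm y" if "y \<in> C" for y
    using P(4)[OF that] norm_cauchy_schwarz[of P y] P(1) by simp
  show ?thesis
  proof (rule that[OF P(1)])
    fix e :: real assume "0 < e"
    define r where "r = min (m/2) (e * m / 4)"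
    have r: "0 < r" "r < m" "2 * r / m < e"
      unfolding r_def using P(2) \<open>0 < e\<close> by (auto simp: min_def field_simps)
    let ?K = "\<Union>y\<in>C. \<Union>z\<in>cball 0 r. {y + z}"
    have "w \<in> sgn ` ?K" if "w \<in> W" for w
    proof -
      have "0 \<in> cball (0::'a) r"
        using r(1) by simp
      then have "w + 0 \<in> ?K"
        using that \<open>W \<subseteq> C\<close> by blast
      moreover have "sgn (w + 0) = w"
        using that W by (auto simp: sgn_div_norm)
      ultimately show ?thesis
        by (metis image_eqI)
    qed
    moreover have "\<exists>w\<in>W. dist w x < e" if x: "x \<in> sgn ` ?K" for x
    proof -
      obtain y where "y \<in> C" "dist (sgn y) x \<le> 2 * r / m"
        using dist_sgn_thickening_le[OF normC P(2) r(2) x] by blast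
      then have "dist (sgn y) x < e"
        using r(3) by linarith
      moreover have "sgn y \<in> W"
        using sgn_convex_hull_sconvex[OF W pos arc] \<open>y \<in> C\<close> unfolding C_def .
      ultimately show ?thesis
        by blast
    qed
    ultimately have "hausdorff_close W (sgn ` ?K) e"
      unfolding hausdorff_close_def using \<open>0 < e\<close> by (metis dist_commute dist_self)
    then show "\<exists>W'\<in>HWulff P. hausdorff_close W W' e"
      using sgn_thickening_in_HWulff[OF \<open>compact C\<close> \<open>convex C\<close> P r(1,2)] by blast
  qed
qed

subsection \<open>Rotating the centre of a Wulff shape\<close>

lemma image_orthogonal_transformation_sphere:
  fixes f :: "'a::euclidean_space \<Rightarrow> 'a"
  assumes f: "orthogonal_transformation f"
  shows "f ` sphere 0 r = sphere 0 r"
proof (intro equalityI subsetI)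
  fix y assume "y \<in> f ` sphere 0 r"
  then show "y \<in> sphere 0 r"
    using orthogonal_transformation_norm[OF f] by auto
next
  fix y :: 'a assume "y \<in> sphere 0 r"
  moreover obtain z where "y = f z"
    using orthogonal_transformation_surj[OF f] by blast
  ultimately show "y \<in> f ` sphere 0 r"
    using orthogonal_transformation_norm[OF f] by auto
qed

lemma image_orthogonal_transformation_hemi:
  fixes f :: "'a::euclidean_space \<Rightarrow> 'a"
  assumes f: "orthogonal_transformation f"
  shows "f ` hemi Q = hemi (f Q)"
proof -
  have hemi_Int: "hemi R = sphere 0 1 \<inter> {x. 0 \<le> R \<bullet> x}" for R :: 'a
    unfolding hemi_def by auto
  have "f ` hemi Q = f ` sphere 0 1 \<inter> f ` {x. 0 \<le> Q \<bullet> x}"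
    unfolding hemi_Int using orthogonal_transformation_inj[OF f] by (simp add: image_Int)
  also have "f ` {x. 0 \<le> Q \<bullet> x} = {y. 0 \<le> f Q \<bullet> y}"
  proof (intro equalityI subsetI)
    fix y assume "y \<in> {y. 0 \<le> f Q \<bullet> y}"
    moreover obtain z where "y = f z"
      using orthogonal_transformation_surj[OF f] by blast
    ultimately show "y \<in> f ` {x. 0 \<le> Q \<bullet> x}"
      using f by (auto simp: orthogonal_transformation_def)
  qed (use f in \<open>auto simp: orthogonal_transformation_def\<close>)
  finally show ?thesis
    unfolding hemi_Int image_orthogonal_transformation_sphere[OF f] .
qed

lemma image_orthogonal_transformation_sarc:
  fixes f :: "'a::euclidean_space \<Rightarrow> 'a"
  assumes f: "orthogonal_transformation f"
  shows "f ` sarc A B = sarc (f A) (f B)"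
proof -
  have lin: "linear f"
    using f by (rule orthogonal_transformation_linear)
  then have "(1 - t) *\<^sub>R f A + t *\<^sub>R f B = f ((1 - t) *\<^sub>R A + t *\<^sub>R B)" for t
    by (simp add: linear_add linear_scale)
  then have arc_point: "f (((1 - t) *\<^sub>R A + t *\<^sub>R B) /\<^sub>R norm ((1 - t) *\<^sub>R A + t *\<^sub>R B))
      = ((1 - t) *\<^sub>R f A + t *\<^sub>R f B) /\<^sub>R norm ((1 - t) *\<^sub>R f A + t *\<^sub>R f B)" for t
    using lin orthogonal_transformation_norm[OF f] by (simp add: linear_scale)
  show ?thesis
  proof (intro equalityI subsetI)
    fix y assume "y \<in> f ` sarc A B"
    then show "y \<in> sarc (f A) (f B)"
      unfolding sarc_def using arc_point by auto
  next
    fix y assume "y \<in> sarc (f A) (f B)"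
    then obtain t where t: "0 \<le> t" "t \<le> 1"
      and y: "y = ((1 - t) *\<^sub>R f A + t *\<^sub>R f B) /\<^sub>R norm ((1 - t) *\<^sub>R f A + t *\<^sub>R f B)"
      unfolding sarc_def by auto
    have "((1 - t) *\<^sub>R A + t *\<^sub>R B) /\<^sub>R norm ((1 - t) *\<^sub>R A + t *\<^sub>R B) \<in> sarc A B"
      unfolding sarc_def using t by blast
    then show "y \<in> f ` sarc A B"
      unfolding y arc_point[symmetric] by (rule imageI)
  qed
qed

lemma HWulff_orthogonal_image:
  fixes f :: "'a::euclidean_space \<Rightarrow> 'a"
  assumes f: "orthogonal_transformation f" and W: "W \<in> HWulff Q"
  shows "f ` W \<in> HWulff (f Q)"
proof -
  have inj: "inj f"
    using f by (rule orthogonal_transformation_inj)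
  obtain Q' e where "W \<noteq> {}" "W \<subseteq> sphere 0 1" "closed W" "W \<inter> hemi (- Q) = {}"
    "Q' \<in> sphere 0 1" "W \<inter> hemi Q' = {}" and arcs: "\<forall>A\<in>W. \<forall>B\<in>W. sarc A B \<subseteq> W"
    and "0 < e" "sphere 0 1 \<inter> ball Q e \<subseteq> W"
    using W unfolding HWulff_def HS_def sconvex_body_def sconvex_def hemispherical_def
      sinterior_point_def by blast
  have avoid: "f ` W \<inter> hemi (f R) = {}" if "W \<inter> hemi R = {}" for R
    using that inj by (simp flip: image_orthogonal_transformation_hemi[OF f] image_Int)
  have sph: "f ` W \<subseteq> sphere 0 1"
    using \<open>W \<subseteq> sphere 0 1\<close> image_orthogonal_transformation_sphere[OF f] by blast
  have cl: "closed (f ` W)"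
    using \<open>closed W\<close> orthogonal_transformation_linear[OF f] by (intro closed_injective_linear_image inj)
  have "f ` (sphere 0 1 \<inter> ball Q e) = sphere 0 1 \<inter> ball (f Q) e"
    using inj by (simp add: image_Int image_orthogonal_transformation_sphere[OF f]
        image_orthogonal_transformation_ball[OF f])
  then have int: "sinterior_point (f Q) (f ` W)"
    unfolding sinterior_point_def using image_mono[OF \<open>sphere 0 1 \<inter> ball Q e \<subseteq> W\<close>, of f] \<open>0 < e\<close>
    by auto
  have "\<forall>A\<in>f ` W. \<forall>B\<in>f ` W. sarc A B \<subseteq> f ` W"
    using arcs by (auto simp flip: image_orthogonal_transformation_sarc[OF f])
  moreover have "f Q' \<in> sphere 0 1"
    using \<open>Q' \<in> sphere 0 1\<close> orthogonal_transformation_norm[OF f] by simp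
  moreover have "f ` W \<inter> hemi (f Q') = {}"
    by (rule avoid[OF \<open>W \<inter> hemi Q' = {}\<close>])
  ultimately have "sconvex (f ` W)"
    unfolding sconvex_def hemispherical_def using sph by blast
  moreover have "f ` W \<inter> hemi (- f Q) = {}"
    using avoid[OF \<open>W \<inter> hemi (- Q) = {}\<close>] linear_neg[OF orthogonal_transformation_linear[OF f]]
    by simp
  moreover have "f ` W \<in> HS"
    unfolding HS_def using sph cl \<open>W \<noteq> {}\<close> by simp
  ultimately show ?thesis
    unfolding HWulff_def sconvex_body_def using cl int by blast
qed

(* A reflection (in the hyperplane orthogonal to u) only when u is a unit vector. *)
definition reflection :: "'a::real_inner \<Rightarrow> 'a \<Rightarrow> 'a" where
  "reflection u x = x - (2 * (x \<bullet> u)) *\<^sub>R u"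

lemma linear_reflection: "linear (reflection u)"
  unfolding reflection_def
  by (rule linearI) (simp_all add: inner_add_left scaleR_add_left algebra_simps)

lemma orthogonal_transformation_reflection:
  fixes u :: "'a::euclidean_space"
  assumes "norm u = 1"
  shows "orthogonal_transformation (reflection u)"
proof -
  have "u \<bullet> u = 1"
    using assms by (simp add: dot_square_norm)
  then have "reflection u x \<bullet> reflection u y = x \<bullet> y" for x y
    unfolding reflection_def by (simp add: inner_diff_left inner_diff_right inner_commute algebra_simps)
  then show ?thesis
    unfolding orthogonal_transformation_def using linear_reflection by blast
qed

lemma reflection_reflection:
  assumes "norm u = 1"
  shows "reflection u (reflection u x) = x"
proof -
  have "u \<bullet> u = 1"
    using assms by (simp add: dot_square_norm)
  then show ?thesis
    unfolding reflection_def by (simp add: inner_diff_left)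
qed

lemma dist_reflection_reflection_le:
  fixes u v x :: "'a::euclidean_space"
  assumes u: "norm u = 1" and v: "norm v = 1" and x: "norm x = 1"
  shows "dist (reflection v (reflection u x)) x \<le> 4 * dist u v"
proof -
  have "reflection v (reflection u x) - x = reflection v (reflection u x - reflection v x)"
    using reflection_reflection[OF v, of x] linear_diff[OF linear_reflection] by metis
  then have "dist (reflection v (reflection u x)) x = norm (reflection u x - reflection v x)"
    using orthogonal_transformation_norm[OF orthogonal_transformation_reflection[OF v]]
    by (simp add: dist_norm)
  also have "reflection u x - reflection v x = 2 *\<^sub>R ((x \<bullet> v) *\<^sub>R (v - u) + (x \<bullet> (v - u)) *\<^sub>R u)"
    unfolding reflection_def by (simp add: algebra_simps inner_diff_right)
  also have "norm \<dots> \<le> 2 * (\<bar>x \<bullet> v\<bar> * norm (v - u) + \<bar>x \<bullet> (v - u)\<bar> * norm u)"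
    using norm_triangle_ineq[of "(x \<bullet> v) *\<^sub>R (v - u)" "(x \<bullet> (v - u)) *\<^sub>R u"] by simp
  also have "\<dots> \<le> 2 * (norm (v - u) + norm (v - u))"
    using Cauchy_Schwarz_ineq2[of x v] Cauchy_Schwarz_ineq2[of x "v - u"] u v x
    by (intro mult_left_mono add_mono) (auto intro: mult_left_le_one_le)
  finally show ?thesis
    by (simp add: dist_norm norm_minus_commute)
qed

lemma dist_sgn_add_le:
  fixes P Q :: "'a::real_normed_vector"
  assumes nP: "norm P = 1" and QP: "Q + P \<noteq> 0"
  shows "dist (sgn (Q + P)) P \<le> dist Q P"
proof -
  have "norm (sgn (Q + P) - sgn (2 *\<^sub>R P)) \<le> 2 * norm ((Q + P) - 2 *\<^sub>R P) / norm (2 *\<^sub>R P)"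
    using QP nP by (intro norm_sgn_diff_le) auto
  moreover have "sgn (2 *\<^sub>R P) = P"
    unfolding sgn_scaleR using nP by (simp add: sgn_div_norm)
  moreover have "norm (2 *\<^sub>R P) = 2"
    unfolding norm_scaleR using nP by simp
  moreover have "(Q + P) - 2 *\<^sub>R P = Q - P"
    by (simp add: scaleR_2)
  ultimately show ?thesis
    by (simp add: dist_norm)
qed

lemma reflection_sgn_add:
  fixes P Q :: "'a::real_inner"
  assumes "norm P = 1" "norm Q = 1" and QP: "Q + P \<noteq> 0"
  shows "reflection (sgn (Q + P)) Q = - P"
proof -
  define n where "n = norm (Q + P)"
  have "0 < n"
    unfolding n_def using QP by simp
  have "Q \<bullet> Q = 1" "P \<bullet> P = 1"
    using assms by (simp_all add: dot_square_norm)
  moreover have "n * n = (Q + P) \<bullet> (Q + P)"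
    unfolding n_def by (simp add: dot_square_norm power2_eq_square)
  ultimately have "n * n = 2 * (Q \<bullet> (Q + P))"
    by (simp add: inner_add_left inner_add_right inner_commute)
  then have coeff: "2 * (Q \<bullet> (Q + P)) / (n * n) = 1"
    using \<open>0 < n\<close> by (metis divide_self less_irrefl mult_pos_pos)
  have "(2 * (Q \<bullet> sgn (Q + P))) *\<^sub>R sgn (Q + P) = (2 * (Q \<bullet> (Q + P)) / (n * n)) *\<^sub>R (Q + P)"
    unfolding sgn_div_norm n_def[symmetric] by (simp add: divide_inverse mult_ac)
  also have "\<dots> = Q + P"
    unfolding coeff by simp
  finally show ?thesis
    unfolding reflection_def by simp
qed

lemma rotation_to_nearby_point:
  fixes P Q :: "'a::euclidean_space"
  assumes P: "P \<in> sphere 0 1" and Q: "Q \<in> sphere 0 1" and opp: "Q \<noteq> - P"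
  obtains f where "orthogonal_transformation f" "f Q = P"
    "\<And>x. x \<in> sphere 0 1 \<Longrightarrow> dist (f x) x \<le> 4 * dist Q P"
proof -
  have nP: "norm P = 1" and nQ: "norm Q = 1"
    using P Q by simp_all
  have QP: "Q + P \<noteq> 0"
    using opp by (simp add: add_eq_0_iff2)
  define a where "a = sgn (Q + P)"
  have na: "norm a = 1"
    unfolding a_def using QP by (simp add: norm_sgn)
  have "reflection P (reflection a Q) = P"
    unfolding a_def reflection_sgn_add[OF nP nQ QP] using nP
    by (simp add: reflection_def scaleR_2 dot_square_norm)
  moreover have "dist (reflection P (reflection a x)) x \<le> 4 * dist Q P" if "x \<in> sphere 0 1" for x
    using dist_reflection_reflection_le[OF na nP, of x] dist_sgn_add_le[OF nP QP] that
    unfolding a_def by simp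
  ultimately show ?thesis
    using that[of "reflection P \<circ> reflection a"]
    by (simp add: orthogonal_transformation_compose orthogonal_transformation_reflection na nP)
qed

lemma HWulff_recentred:
  fixes P Q :: "'a::euclidean_space"
  assumes "P \<in> sphere 0 1" "Q \<in> sphere 0 1" "Q \<noteq> - P" and W: "W \<in> HWulff Q"
    and e: "4 * dist Q P < e"
  shows "\<exists>W'\<in>HWulff P. hausdorff_close W W' e"
proof -
  obtain f where f: "orthogonal_transformation f" "f Q = P"
    and near: "\<And>x. x \<in> sphere 0 1 \<Longrightarrow> dist (f x) x \<le> 4 * dist Q P"
    using rotation_to_nearby_point[OF assms(1-3)] by blast
  have "W \<subseteq> sphere 0 1"
    using W unfolding HWulff_def HS_def by auto
  then have "dist x (f x) < e" if "x \<in> W" for x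
    using near[of x] e that by (auto simp: dist_commute)
  then have "hausdorff_close W (f ` W) e"
    unfolding hausdorff_close_def by blast
  moreover have "f ` W \<in> HWulff P"
    using HWulff_orthogonal_image[OF f(1) W] f(2) by simp
  ultimately show ?thesis
    by blast
qed

subsection \<open>The closure of the spherical convex sets\<close>

lemma Hsconv_subset_HS: "Hsconv \<subseteq> HS"
  unfolding Hsconv_def HS_def sconvex_def hemispherical_def by auto

lemma HWulff_subset_HS: "HWulff P \<subseteq> HS"
  unfolding HWulff_def by auto

lemma HWulff_subset_Hsconv: "HWulff P \<subseteq> Hsconv"
  unfolding HWulff_def Hsconv_def HS_def sconvex_body_def by auto

lemma hclosure_HWulff_if_near_centres:
  fixes P :: "'a::euclidean_space"
  assumes P: "P \<in> sphere 0 1" and X: "X \<in> HS"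
    and near: "\<And>e. 0 < e \<Longrightarrow> \<exists>Q\<in>sphere 0 1. dist Q P < e \<and> (\<exists>W\<in>HWulff Q. hausdorff_close X W e)"
  shows "X \<in> hclosure (HWulff P)"
  unfolding hclosure_eq_hausdorff_close[OF HWulff_subset_HS]
proof (intro CollectI conjI X allI impI)
  fix e :: real assume "0 < e"
  define d where "d = min 1 (e/5)"
  have "0 < d" "d \<le> 1" "5 * d \<le> e"
    unfolding d_def using \<open>0 < e\<close> by auto
  then obtain Q W where Q: "Q \<in> sphere 0 1" "dist Q P < d"
    and W: "W \<in> HWulff Q" "hausdorff_close X W d"
    using near by blast
  have "dist (- P) P = norm (P + P)"
    by (metis dist_commute dist_norm diff_minus_eq_add)
  also have "\<dots> = 2"
    unfolding scaleR_2[symmetric] norm_scaleR using P by simp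
  finally have "Q \<noteq> - P"
    using P Q(2) \<open>d \<le> 1\<close> by auto
  then obtain W' where W': "W' \<in> HWulff P" "hausdorff_close W W' (4 * d)"
    using HWulff_recentred[OF P Q(1) _ W(1)] Q(2) by force
  have "hausdorff_close X W' (d + 4 * d)"
    by (rule hausdorff_close_trans[OF W(2) W'(2)])
  then have "hausdorff_close X W' e"
    by (rule hausdorff_close_mono) (use \<open>5 * d \<le> e\<close> in simp)
  then show "\<exists>W\<in>HWulff P. hausdorff_close X W e"
    using W'(1) by blast
qed

lemma hclosure_Hsconv_in_hclosure_HWulff:
  fixes X :: "'a::euclidean_space set"
  assumes "X \<in> hclosure Hsconv"
  shows "\<exists>P\<in>sphere 0 1. X \<in> hclosure (HWulff P)"
proof -
  have X: "X \<in> HS" and "\<forall>k. \<exists>W\<in>Hsconv. hausdorff_close X W (inverse (real (Suc k)))"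
    using assms unfolding hclosure_eq_hausdorff_close[OF Hsconv_subset_HS] by auto
  then obtain W where W: "\<And>k. W k \<in> Hsconv" "\<And>k. hausdorff_close X (W k) (inverse (real (Suc k)))"
    by metis
  have "\<forall>k. \<exists>P\<in>sphere 0 1. \<forall>e>0. \<exists>W'\<in>HWulff P. hausdorff_close (W k) W' e"
    using Hsconv_approximated_by_HWulff[OF W(1)] by blast
  then obtain c where c: "\<And>k. c k \<in> sphere 0 1"
    "\<And>k e. 0 < e \<Longrightarrow> \<exists>W'\<in>HWulff (c k). hausdorff_close (W k) W' e"
    by metis
  obtain P r where P: "P \<in> sphere 0 1" "strict_mono r" "(c \<circ> r) \<longlonglongrightarrow> P"
    using compact_imp_seq_compact[OF compact_sphere] c(1) unfolding seq_compact_def by meson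
  have "\<exists>Q\<in>sphere 0 1. dist Q P < e \<and> (\<exists>W'\<in>HWulff Q. hausdorff_close X W' e)" if "0 < e" for e
  proof -
    have "\<forall>\<^sub>F n in sequentially. inverse (real (Suc (r n))) < e/2"
      using LIMSEQ_subseq_LIMSEQ[OF LIMSEQ_inverse_real_of_nat P(2)] \<open>0 < e\<close>
      by (intro order_tendstoD(2)) (auto simp: o_def)
    moreover have "\<forall>\<^sub>F n in sequentially. dist ((c \<circ> r) n) P < e"
      by (rule tendstoD[OF P(3) \<open>0 < e\<close>])
    ultimately have "\<forall>\<^sub>F n in sequentially. inverse (real (Suc (r n))) < e/2 \<and> dist ((c \<circ> r) n) P < e"
      by (rule eventually_conj)
    then obtain k where k: "inverse (real (Suc k)) < e/2" "dist (c k) P < e"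
      unfolding eventually_sequentially o_def by blast
    obtain W' where W': "W' \<in> HWulff (c k)" "hausdorff_close (W k) W' (e/2)"
      using c(2)[of "e/2" k] \<open>0 < e\<close> by auto
    have "hausdorff_close X W' (inverse (real (Suc k)) + e/2)"
      by (rule hausdorff_close_trans[OF W(2) W'(2)])
    then have "hausdorff_close X W' e"
      by (rule hausdorff_close_mono) (use k(1) in simp)
    then show ?thesis
      using c(1) k(2) W'(1) by blast
  qed
  then show ?thesis
    using hclosure_HWulff_if_near_centres[OF P(1) X] P(1) by blast
qed

(* The argument works in every dimension. *)
theorem proposition3:
  assumes "DIM('a::euclidean_space) \<ge> 2"
  shows "(\<Union>P\<in>sphere (0::'a) 1. hclosure (HWulff P)) = hclosure (Hsconv :: 'a set set)"
proof
  show "(\<Union>P\<in>sphere (0::'a) 1. hclosure (HWulff P)) \<subseteq> hclosure Hsconv"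
    unfolding hclosure_def using HWulff_subset_Hsconv by blast
  show "hclosure Hsconv \<subseteq> (\<Union>P\<in>sphere (0::'a) 1. hclosure (HWulff P))"
    using hclosure_Hsconv_in_hclosure_HWulff by blast
qed

end
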